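(* Let $R$ and $S$ be commutative rings with identity, $f:R\to S$ a ring homomorphism, and $J$ a nonzero proper ideal of $S$. If $R\bowtie^f J$ is compactly packed, then $R$ is compactly packed and the set $\operatorname{Spec}(S)\setminus V(J)$ is compactly packed.
   Context: $R\bowtie^f J:=\{(r,f(r)+j)\mid r\in R,\ j\in J\}$, a subring of $R\times S$. For a commutative ring $A$, $V(I)$ is the set of prime ideals of $A$ containing the ideal $I$. A subset $X\subseteq\operatorname{Spec}(A)$ is compactly packed if whenever an ideal $I$ of $A$ is contained in the union of a family $\{\mathfrak{p}_i\}_i$ of elements of $X$, then $I\subseteq\mathfrak{p}_i$ for some $i$; the ring $A$ is compactly packed if $\operatorname{Spec}(A)$ is compactly packed. *)

theory Defs
  imports "HOL-Algebra.Algebra"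
begin

definition Spec :: "('a, 'm) ring_scheme \<Rightarrow> 'a set set" where
  "Spec A = {P. primeideal P A}"

definition Vset :: "('a, 'm) ring_scheme \<Rightarrow> 'a set \<Rightarrow> 'a set set" where
  "Vset A I = {P \<in> Spec A. I \<subseteq> P}"

definition compactly_packed_set :: "('a, 'm) ring_scheme \<Rightarrow> 'a set set \<Rightarrow> bool" where
  "compactly_packed_set A Xs \<longleftrightarrow>
     (\<forall>K Fam. ideal K A \<longrightarrow> Fam \<subseteq> Xs \<longrightarrow> K \<subseteq> Union Fam \<longrightarrow> (\<exists>P\<in>Fam. K \<subseteq> P))"

definition compactly_packed :: "('a, 'm) ring_scheme \<Rightarrow> bool" where
  "compactly_packed A \<longleftrightarrow> compactly_packed_set A (Spec A)"

definition amalg :: "('a, 'm) ring_scheme \<Rightarrow> ('b, 'n) ring_scheme \<Rightarrow> ('a \<Rightarrow> 'b)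
    \<Rightarrow> 'b set \<Rightarrow> ('a \<times> 'b) ring" where
  "amalg R S f J = (RDirProd R S)\<lparr>carrier :=
      {(r, f r \<oplus>\<^bsub>S\<^esub> j) | r j. r \<in> carrier R \<and> j \<in> J}\<rparr>"

end

(* Both projections of R \<bowtie>^f J are ring homomorphisms, and the one onto R is surjective.
   If h : A \<rightarrow> B is a ring homomorphism and A is compactly packed, then the image h K of an
   ideal K of A, once covered by primes of B, lies in one of them: their preimages are primes
   of A covering K. When h is surjective every ideal of B is such an image, which gives the claim
   for R. For S, let an ideal K be covered by primes Q not containing J. The ideal
   0 \<times> (K \<inter> J) of R \<bowtie>^f J has image K \<inter> J under the second projection, so K \<inter> J lies in
   one such Q; since K J \<subseteq> K \<inter> J and Q is a prime not containing J, we get K \<subseteq> Q. *)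

theory Submission
  imports Defs
begin

lemma RDirProd_ops:
  "x \<otimes>\<^bsub>RDirProd R S\<^esub> y = (fst x \<otimes>\<^bsub>R\<^esub> fst y, snd x \<otimes>\<^bsub>S\<^esub> snd y)"
  "x \<oplus>\<^bsub>RDirProd R S\<^esub> y = (fst x \<oplus>\<^bsub>R\<^esub> fst y, snd x \<oplus>\<^bsub>S\<^esub> snd y)"
  "\<one>\<^bsub>RDirProd R S\<^esub> = (\<one>\<^bsub>R\<^esub>, \<one>\<^bsub>S\<^esub>)"
  "\<zero>\<^bsub>RDirProd R S\<^esub> = (\<zero>\<^bsub>R\<^esub>, \<zero>\<^bsub>S\<^esub>)"
  by (auto simp: RDirProd_def DirProd_def monoid.defs case_prod_beta)

lemma a_inv_RDirProd:
  assumes "ring R" "ring S" "x \<in> carrier R" "y \<in> carrier S"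
  shows "\<ominus>\<^bsub>RDirProd R S\<^esub> (x, y) = (\<ominus>\<^bsub>R\<^esub> x, \<ominus>\<^bsub>S\<^esub> y)"
  unfolding a_inv_def RDirProd_add_monoid
  using assms by (intro inv_DirProd) (auto intro: abelian_group.a_group ring.is_abelian_group)

lemma (in ring) primeideal_inter_subset:
  assumes "primeideal P R" "ideal I R" "ideal J R" "I \<inter> J \<subseteq> P"
  shows "I \<subseteq> P \<or> J \<subseteq> P"
  using assms ideal_prod_inter primeideal_divides_ideal_prod by blast

lemma compactly_packed_ideal_image:
  assumes h: "ring_hom_ring A B h" and A: "cring A" and cp: "compactly_packed A"
    and K: "ideal K A" and Fam: "Fam \<subseteq> Spec B" and cover: "h ` K \<subseteq> \<Union>Fam"
  shows "\<exists>Q\<in>Fam. h ` K \<subseteq> Q"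
proof -
  define pre where "pre Q = {a \<in> carrier A. h a \<in> Q}" for Q
  have "pre ` Fam \<subseteq> Spec A"
    using Fam ring_hom_ring.primeideal_vimage[OF h A] unfolding Spec_def pre_def by blast
  moreover have "K \<subseteq> \<Union>(pre ` Fam)"
    using cover ideal.Icarr[OF K] unfolding pre_def by blast
  ultimately obtain Q where "Q \<in> Fam" "K \<subseteq> pre Q"
    using cp K unfolding compactly_packed_def compactly_packed_set_def by blast
  then show ?thesis unfolding pre_def by blast
qed

lemma compactly_packed_surjective_hom:
  assumes h: "ring_hom_ring A B h" and A: "cring A" and surj: "h ` carrier A = carrier B"
    and cp: "compactly_packed A"
  shows "compactly_packed B"
  unfolding compactly_packed_def compactly_packed_set_def
proof (intro allI impI)
  fix I Fam assume I: "ideal I B" and Fam: "Fam \<subseteq> Spec B" and cover: "I \<subseteq> \<Union>Fam"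
  let ?K = "{a \<in> carrier A. h a \<in> I}"
  have image: "h ` ?K = I"
    using ideal.Icarr[OF I] by (auto simp flip: surj)
  show "\<exists>P\<in>Fam. I \<subseteq> P"
    using compactly_packed_ideal_image[OF h A cp ring_hom_ring.ideal_vimage[OF h I] Fam]
    unfolding image using cover by blast
qed

lemma compactly_packed_set_Spec_minus_Vset:
  assumes h: "ring_hom_ring A B h" and A: "cring A" and cp: "compactly_packed A"
    and J: "ideal J B"
    and lift: "\<And>K. ideal K B \<Longrightarrow> \<exists>K'. ideal K' A \<and> h ` K' = K \<inter> J"
  shows "compactly_packed_set B (Spec B - Vset B J)"
  unfolding compactly_packed_set_def
proof (intro allI impI)
  fix K Fam assume K: "ideal K B" and Fam: "Fam \<subseteq> Spec B - Vset B J" and cover: "K \<subseteq> \<Union>Fam"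
  obtain K' where K': "ideal K' A" "h ` K' = K \<inter> J"
    using lift[OF K] by blast
  obtain Q where Q: "Q \<in> Fam" "K \<inter> J \<subseteq> Q"
    using compactly_packed_ideal_image[OF h A cp K'(1), of Fam] Fam cover K'(2) by auto
  have "primeideal Q B" "\<not> J \<subseteq> Q"
    using Q(1) Fam unfolding Spec_def Vset_def by auto
  then have "K \<subseteq> Q"
    using ring.primeideal_inter_subset[OF ring_hom_ring.axioms(2)[OF h] _ K J Q(2)] by blast
  then show "\<exists>P\<in>Fam. K \<subseteq> P"
    using Q(1) by blast
qed

lemma amalg_simps:
  "carrier (amalg R S f J) = {(r, f r \<oplus>\<^bsub>S\<^esub> j) | r j. r \<in> carrier R \<and> j \<in> J}"
  "x \<otimes>\<^bsub>amalg R S f J\<^esub> y = (fst x \<otimes>\<^bsub>R\<^esub> fst y, snd x \<otimes>\<^bsub>S\<^esub> snd y)"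
  "x \<oplus>\<^bsub>amalg R S f J\<^esub> y = (fst x \<oplus>\<^bsub>R\<^esub> fst y, snd x \<oplus>\<^bsub>S\<^esub> snd y)"
  "\<one>\<^bsub>amalg R S f J\<^esub> = (\<one>\<^bsub>R\<^esub>, \<one>\<^bsub>S\<^esub>)"
  "\<zero>\<^bsub>amalg R S f J\<^esub> = (\<zero>\<^bsub>R\<^esub>, \<zero>\<^bsub>S\<^esub>)"
  by (auto simp: amalg_def RDirProd_ops)

lemma amalg_memI: "r \<in> carrier R \<Longrightarrow> j \<in> J \<Longrightarrow> (r, f r \<oplus>\<^bsub>S\<^esub> j) \<in> carrier (amalg R S f J)"
  by (auto simp: amalg_simps)

lemma amalg_carrier_subset:
  assumes "ring S" "f \<in> ring_hom R S" "J \<subseteq> carrier S"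
  shows "carrier (amalg R S f J) \<subseteq> carrier R \<times> carrier S"
proof -
  interpret S: ring S by fact
  show ?thesis
    using assms(3) ring_hom_closed[OF assms(2)] by (auto simp: amalg_simps)
qed

lemma amalg_mult_closed:
  assumes R: "ring R" and S: "ring S" and f: "f \<in> ring_hom R S" and J: "ideal J S"
    and "x \<in> carrier (amalg R S f J)" "y \<in> carrier (amalg R S f J)"
  shows "x \<otimes>\<^bsub>RDirProd R S\<^esub> y \<in> carrier (amalg R S f J)"
proof -
  interpret R: ring R by fact
  interpret S: ring S by fact
  interpret J: ideal J S by fact
  obtain r j r' j' where x: "x = (r, f r \<oplus>\<^bsub>S\<^esub> j)" "r \<in> carrier R" "j \<in> J"
    and y: "y = (r', f r' \<oplus>\<^bsub>S\<^esub> j')" "r' \<in> carrier R" "j' \<in> J"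
    using assms(5,6) by (auto simp: amalg_simps)
  have jS: "j \<in> carrier S" "j' \<in> carrier S" and fS: "f r \<in> carrier S" "f r' \<in> carrier S"
    using x y J.Icarr ring_hom_closed[OF f] by auto
  have "(f r \<oplus>\<^bsub>S\<^esub> j) \<otimes>\<^bsub>S\<^esub> (f r' \<oplus>\<^bsub>S\<^esub> j')
      = f r \<otimes>\<^bsub>S\<^esub> f r' \<oplus>\<^bsub>S\<^esub> (f r \<otimes>\<^bsub>S\<^esub> j' \<oplus>\<^bsub>S\<^esub> j \<otimes>\<^bsub>S\<^esub> (f r' \<oplus>\<^bsub>S\<^esub> j'))"
    using jS fS by algebra
  then have "x \<otimes>\<^bsub>RDirProd R S\<^esub> y = (r \<otimes>\<^bsub>R\<^esub> r',
      f (r \<otimes>\<^bsub>R\<^esub> r') \<oplus>\<^bsub>S\<^esub> (f r \<otimes>\<^bsub>S\<^esub> j' \<oplus>\<^bsub>S\<^esub> j \<otimes>\<^bsub>S\<^esub> (f r' \<oplus>\<^bsub>S\<^esub> j')))"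
    using x y by (simp add: RDirProd_ops ring_hom_mult[OF f])
  moreover have "f r \<otimes>\<^bsub>S\<^esub> j' \<oplus>\<^bsub>S\<^esub> j \<otimes>\<^bsub>S\<^esub> (f r' \<oplus>\<^bsub>S\<^esub> j') \<in> J"
    using x y jS fS by (simp add: J.I_l_closed J.I_r_closed J.a_closed)
  ultimately show ?thesis
    using x y by (metis amalg_memI R.m_closed)
qed

lemma amalg_subring:
  assumes R: "ring R" and S: "ring S" and f: "f \<in> ring_hom R S" and J: "ideal J S"
  shows "subring (carrier (amalg R S f J)) (RDirProd R S)"
proof -
  interpret R: ring R by fact
  interpret S: ring S by fact
  interpret f: ring_hom_ring R S f
    using R S f by (simp add: ring_hom_ring_def ring_hom_ring_axioms_def)
  interpret J: ideal J S by fact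
  interpret P: ring "RDirProd R S"
    using RDirProd_ring R S by blast
  let ?A = "carrier (amalg R S f J)"
  show ?thesis
  proof (rule P.subringI)
    show "?A \<subseteq> carrier (RDirProd R S)"
      using amalg_carrier_subset[OF S f J.a_subset] by (simp add: RDirProd_carrier)
    show "\<one>\<^bsub>RDirProd R S\<^esub> \<in> ?A"
      using amalg_memI[OF R.one_closed J.zero_closed, where f = f and S = S] by (simp add: RDirProd_ops)
  next
    fix x assume "x \<in> ?A"
    then obtain r j where x: "x = (r, f r \<oplus>\<^bsub>S\<^esub> j)" "r \<in> carrier R" "j \<in> J"
      by (auto simp: amalg_simps)
    have "\<ominus>\<^bsub>RDirProd R S\<^esub> x = (\<ominus>\<^bsub>R\<^esub> r, f (\<ominus>\<^bsub>R\<^esub> r) \<oplus>\<^bsub>S\<^esub> \<ominus>\<^bsub>S\<^esub> j)"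
      using x J.Icarr by (simp add: a_inv_RDirProd R S S.minus_add)
    then show "\<ominus>\<^bsub>RDirProd R S\<^esub> x \<in> ?A"
      using x by (metis amalg_memI R.a_inv_closed J.a_inv_closed)
  next
    fix x y assume "x \<in> ?A" "y \<in> ?A"
    then show "x \<otimes>\<^bsub>RDirProd R S\<^esub> y \<in> ?A"
      by (rule amalg_mult_closed[OF R S f J])
    from \<open>x \<in> ?A\<close> \<open>y \<in> ?A\<close> obtain r j r' j'
      where x: "x = (r, f r \<oplus>\<^bsub>S\<^esub> j)" "r \<in> carrier R" "j \<in> J"
        and y: "y = (r', f r' \<oplus>\<^bsub>S\<^esub> j')" "r' \<in> carrier R" "j' \<in> J"
      by (auto simp: amalg_simps)
    have "x \<oplus>\<^bsub>RDirProd R S\<^esub> y = (r \<oplus>\<^bsub>R\<^esub> r', f (r \<oplus>\<^bsub>R\<^esub> r') \<oplus>\<^bsub>S\<^esub> (j \<oplus>\<^bsub>S\<^esub> j'))"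
      using x y J.Icarr by (simp add: RDirProd_ops S.a_ac)
    then show "x \<oplus>\<^bsub>RDirProd R S\<^esub> y \<in> ?A"
      using x y by (metis amalg_memI R.a_closed J.a_closed)
  qed
qed

lemma amalg_cring:
  assumes R: "cring R" and S: "cring S" and f: "f \<in> ring_hom R S" and J: "ideal J S"
  shows "cring (amalg R S f J)"
proof -
  interpret R: cring R by fact
  interpret S: cring S by fact
  interpret P: ring "RDirProd R S"
    using RDirProd_ring R.ring_axioms S.ring_axioms by blast
  let ?A = "carrier (amalg R S f J)"
  have sub: "?A \<subseteq> carrier R \<times> carrier S"
    using amalg_carrier_subset[OF S.ring_axioms f] ideal.Icarr[OF J] by blast
  have "subcring ?A (RDirProd R S)"
  proof (rule P.subcringI)
    show "subring ?A (RDirProd R S)"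
      using amalg_subring[OF R.ring_axioms S.ring_axioms f J] .
    fix x y assume "x \<in> ?A" "y \<in> ?A"
    then have "x \<in> carrier R \<times> carrier S" "y \<in> carrier R \<times> carrier S"
      using sub by blast+
    then show "x \<otimes>\<^bsub>RDirProd R S\<^esub> y = y \<otimes>\<^bsub>RDirProd R S\<^esub> x"
      by (simp add: RDirProd_ops R.m_comm S.m_comm mem_Times_iff)
  qed
  then show ?thesis
    using P.subcring_iff sub by (simp add: amalg_def RDirProd_carrier)
qed

lemma amalg_projection_homs:
  assumes R: "cring R" and S: "cring S" and f: "f \<in> ring_hom R S" and J: "ideal J S"
  shows "ring_hom_ring (amalg R S f J) R fst" "ring_hom_ring (amalg R S f J) S snd"
proof -
  have A: "ring (amalg R S f J)"
    using amalg_cring[OF assms] cring.axioms(1) by blast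
  have sub: "carrier (amalg R S f J) \<subseteq> carrier R \<times> carrier S"
    using amalg_carrier_subset[OF cring.axioms(1)[OF S] f] ideal.Icarr[OF J] by blast
  show "ring_hom_ring (amalg R S f J) R fst"
    by (rule ring_hom_ringI[OF A cring.axioms(1)[OF R]]) (use sub in \<open>auto simp: amalg_simps(2-5)\<close>)
  show "ring_hom_ring (amalg R S f J) S snd"
    by (rule ring_hom_ringI[OF A cring.axioms(1)[OF S]]) (use sub in \<open>auto simp: amalg_simps(2-5)\<close>)
qed

lemma fst_image_amalg:
  assumes "ideal J S"
  shows "fst ` carrier (amalg R S f J) = carrier R"
proof -
  have "(r, f r \<oplus>\<^bsub>S\<^esub> \<zero>\<^bsub>S\<^esub>) \<in> carrier (amalg R S f J)" if "r \<in> carrier R" for r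
    using that additive_subgroup.zero_closed[OF ideal.axioms(1)[OF assms]] by (rule amalg_memI)
  then show ?thesis
    by (force simp: amalg_simps)
qed

lemma amalg_ideal_over_inter:
  assumes R: "cring R" and S: "cring S" and f: "f \<in> ring_hom R S" and J: "ideal J S"
    and K: "ideal K S"
  shows "\<exists>K'. ideal K' (amalg R S f J) \<and> snd ` K' = K \<inter> J"
proof -
  interpret R: cring R by fact
  interpret S: cring S by fact
  interpret J: ideal J S by fact
  interpret A: cring "amalg R S f J"
    using amalg_cring[OF assms(1-4)] .
  interpret fst: ring_hom_ring "amalg R S f J" R fst
    using amalg_projection_homs[OF assms(1-4)] by blast
  interpret snd: ring_hom_ring "amalg R S f J" S snd
    using amalg_projection_homs[OF assms(1-4)] by blast
  let ?K' = "{a \<in> carrier (amalg R S f J). fst a \<in> {\<zero>\<^bsub>R\<^esub>}}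
    \<inter> {a \<in> carrier (amalg R S f J). snd a \<in> K}"
  have "ideal ?K' (amalg R S f J)"
    by (rule A.i_intersect[OF fst.ideal_vimage[OF R.zeroideal] snd.ideal_vimage[OF K]])
  moreover have "snd ` ?K' = K \<inter> J"
  proof
    show "snd ` ?K' \<subseteq> K \<inter> J"
      using J.Icarr f by (auto simp: amalg_simps ring_hom_zero[OF f R.ring_axioms S.ring_axioms])
    show "K \<inter> J \<subseteq> snd ` ?K'"
    proof
      fix s assume s: "s \<in> K \<inter> J"
      then have "(\<zero>\<^bsub>R\<^esub>, s) \<in> ?K'"
        using amalg_memI[OF R.zero_closed, where j = s and f = f and S = S] J.Icarr
        by (simp add: ring_hom_zero[OF f R.ring_axioms S.ring_axioms])
      then show "s \<in> snd ` ?K'"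
        by force
    qed
  qed
  ultimately show ?thesis
    by blast
qed

theorem theorem4p2:
  fixes R :: "('a, 'm) ring_scheme" and S :: "('b, 'n) ring_scheme"
    and f :: "'a \<Rightarrow> 'b" and J :: "'b set"
  assumes "cring R" and "cring S"
    and "f \<in> ring_hom R S"
    and "ideal J S" and "J \<noteq> {\<zero>\<^bsub>S\<^esub>}" and "J \<noteq> carrier S"
    and "compactly_packed (amalg R S f J)"
  shows "compactly_packed R \<and> compactly_packed_set S (Spec S - Vset S J)"
proof
  have A: "cring (amalg R S f J)"
    using amalg_cring assms(1-4) .
  show "compactly_packed R"
    using compactly_packed_surjective_hom[OF amalg_projection_homs(1)[OF assms(1-4)] A
        fst_image_amalg[OF assms(4)] assms(7)] .
  show "compactly_packed_set S (Spec S - Vset S J)"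
    using compactly_packed_set_Spec_minus_Vset[OF amalg_projection_homs(2)[OF assms(1-4)] A
        assms(7,4) amalg_ideal_over_inter[OF assms(1-4)]] .
qed

end
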